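(* Let $E$ be a real Hilbert space with $\dim(E)\ge2$, $h\in E$ a unit vector, $H^+=\{x\in E\mid (h,x)>0\}$, and define $\preceq$ on $H^+$ by $x\preceq y\iff\|x-y_\perp\|\le y_h$. If $x,y\in H^+$ satisfy $x\preceq y$ and $x\ne y$, then $\ln(x_h)<\ln(y_h)$.
   Context: For $x\in E$, $x_h=(h,x)$ and $x_\perp=x-(h,x)h$. *)

theory Defs
  imports "HOL-Analysis.Analysis"
begin

text \<open>Real Hilbert space: type class real_inner together with complete_space.
  For a unit vector h: x_h = (h,x) and x_perp = x - (h,x) h.\<close>

definition hcomp :: "'a::real_inner \<Rightarrow> 'a \<Rightarrow> real" where
  "hcomp h x = inner h x"

definition hperp :: "'a::real_inner \<Rightarrow> 'a \<Rightarrow> 'a" where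
  "hperp h x = x - (inner h x) *\<^sub>R h"

definition Hplus :: "'a::real_inner \<Rightarrow> 'a set" where
  "Hplus h = {x. inner h x > 0}"

definition hpreceq :: "'a::real_inner \<Rightarrow> 'a \<Rightarrow> 'a \<Rightarrow> bool" where
  "hpreceq h x y \<longleftrightarrow> x \<in> Hplus h \<and> y \<in> Hplus h \<and> norm (x - hperp h y) \<le> hcomp h y"

end

theory Submission
  imports Defs
begin

text \<open>Splitting \<open>x - y\<^sub>\<perp>\<close> into its components along and orthogonal to \<open>h\<close>, Pythagoras turns
  \<open>x \<preceq> y\<close> into \<open>\<parallel>(x - y)\<^sub>\<perp>\<parallel>\<^sup>2 + x\<^sub>h\<^sup>2 \<le> y\<^sub>h\<^sup>2\<close>. Hence \<open>x\<^sub>h \<le> y\<^sub>h\<close>, and equality forces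
  \<open>(x - y)\<^sub>\<perp> = 0\<close> and \<open>(x - y)\<^sub>h = 0\<close>, i.e. \<open>x = y\<close>; \<open>ln\<close> is strictly increasing on the positive reals.\<close>

lemma orthogonal_hperp:
  assumes "norm h = 1"
  shows "orthogonal (hperp h z) h"
proof -
  have "inner h h = 1"
    using assms by (simp add: norm_eq_sqrt_inner)
  then show ?thesis
    by (simp add: orthogonal_def hperp_def inner_diff_right inner_commute)
qed

lemma hperp_plus_hcomp: "hperp h z + hcomp h z *\<^sub>R h = z"
  by (simp add: hperp_def hcomp_def)

lemma hperp_diff: "hperp h (x - y) = hperp h x - hperp h y"
  by (simp add: hperp_def inner_diff_right algebra_simps)

lemma hcomp_diff: "hcomp h (x - y) = hcomp h x - hcomp h y"
  by (simp add: hcomp_def inner_diff_right)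

lemma hperp_hcomp_eq_0_imp_eq_0:
  assumes "hperp h z = 0" and "hcomp h z = 0"
  shows "z = 0"
  using hperp_plus_hcomp [of h z] assms by simp

lemma norm_diff_hperp_squared:
  assumes "norm h = 1"
  shows "(norm (x - hperp h y))\<^sup>2 = (norm (hperp h (x - y)))\<^sup>2 + (hcomp h x)\<^sup>2"
proof -
  have "x - hperp h y = hperp h (x - y) + hcomp h x *\<^sub>R h"
    using hperp_plus_hcomp [of h x] by (simp add: hperp_diff algebra_simps)
  moreover have "orthogonal (hperp h (x - y)) (hcomp h x *\<^sub>R h)"
    using orthogonal_hperp [OF assms] by (simp add: orthogonal_clauses)
  ultimately show ?thesis
    using assms by (simp add: norm_add_Pythagorean)
qed

lemma hpreceq_pythagorean:
  assumes "norm h = 1" and "hpreceq h x y"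
  shows "(norm (hperp h (x - y)))\<^sup>2 + (hcomp h x)\<^sup>2 \<le> (hcomp h y)\<^sup>2"
proof -
  have "norm (x - hperp h y) \<le> hcomp h y"
    using assms(2) by (simp add: hpreceq_def)
  then have "(norm (x - hperp h y))\<^sup>2 \<le> (hcomp h y)\<^sup>2"
    by (simp add: power_mono)
  then show ?thesis
    by (simp add: norm_diff_hperp_squared [OF assms(1)])
qed

lemma hpreceq_hcomp_less:
  assumes "norm h = 1" and "hpreceq h x y" and "x \<noteq> y"
  shows "hcomp h x < hcomp h y"
proof -
  have pos: "hcomp h x > 0" "hcomp h y > 0"
    using assms(2) by (auto simp: hpreceq_def Hplus_def hcomp_def)
  have ineq: "(norm (hperp h (x - y)))\<^sup>2 + (hcomp h x)\<^sup>2 \<le> (hcomp h y)\<^sup>2"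
    using hpreceq_pythagorean [OF assms(1,2)] .
  then have "(hcomp h x)\<^sup>2 \<le> (hcomp h y)\<^sup>2"
    using zero_le_power2 [of "norm (hperp h (x - y))"] by linarith
  then have "hcomp h x \<le> hcomp h y"
    using pos(2) by (rule power2_le_imp_le [OF _ less_imp_le])
  moreover have "hcomp h x \<noteq> hcomp h y"
  proof
    assume eq: "hcomp h x = hcomp h y"
    then have "hperp h (x - y) = 0"
      using ineq by simp
    moreover have "hcomp h (x - y) = 0"
      using eq by (simp add: hcomp_diff)
    ultimately have "x - y = 0"
      by (rule hperp_hcomp_eq_0_imp_eq_0)
    with assms(3) show False
      by simp
  qed
  ultimately show ?thesis
    by simp
qed

theorem mainTheorem19:
  fixes h x y :: "'a::{real_inner, complete_space}"
  assumes dim2: "\<exists>u v :: 'a. independent {u, v} \<and> u \<noteq> v"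
    and unit: "norm h = 1"
    and xH: "x \<in> Hplus h" and yH: "y \<in> Hplus h"
    and le: "hpreceq h x y" and ne: "x \<noteq> y"
  shows "ln (hcomp h x) < ln (hcomp h y)"
proof -
  have "hcomp h x > 0"
    using xH by (simp add: Hplus_def hcomp_def)
  moreover have "hcomp h x < hcomp h y"
    using hpreceq_hcomp_less [OF unit le ne] .
  ultimately show ?thesis
    by simp
qed

end
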